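(* Let $d_1,d_2,d_3\ge2$. The average of the one-tangle entangling power over the unitary group $U(d_1d_2d_3)$ with respect to the Haar measure is $$\langle\varepsilon_\tau\rangle_{U}=\frac{3d_1d_2d_3+3-d_1-d_2-d_3-d_1d_2-d_1d_3-d_2d_3}{\tfrac32(d_1d_2d_3+1)}.$$
   Context: Consider $\mathcal{H}=\mathbb{C}^{d_1}\otimes\mathbb{C}^{d_2}\otimes\mathbb{C}^{d_3}$. For a bipartition of the parties into disjoint nonempty sets $A\cup B=\{1,2,3\}$ and a pure state $|\psi\rangle$, $\tau_{A|B}(|\psi\rangle)=2\big(1-\mathrm{Tr}\,(\mathrm{Tr}_B|\psi\rangle\langle\psi|)^2\big)$. The one-tangle is $\tau_1=\tfrac13(\tau_{12|3}+\tau_{13|2}+\tau_{23|1})$. The entangling power of a unitary $U$ on $\mathcal{H}$ is $\varepsilon_\tau(U)=\big\langle\tau_1(U|\psi_1\rangle|\psi_2\rangle|\psi_3\rangle)\big\rangle$, averaged over product states with each $|\psi_i\rangle$ drawn independently from the uniform measure on the unit sphere of $\mathbb{C}^{d_i}$. *)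

theory Defs
  imports "HOL-Probability.Probability"
begin

text \<open>The local dimensions are given by a function dim :: nat => nat on the party
  labels 0,1,2 (party 1,2,3 of the paper).  A vector of C^d is an extensional
  function nat => complex supported on {..<d}.  A vector of the total space
  C^(d1 d2 d3) is indexed by the flattened (Kronecker / row-major) index.\<close>

definition dims3 :: "nat \<Rightarrow> nat \<Rightarrow> nat \<Rightarrow> nat \<Rightarrow> nat" where
  "dims3 d1 d2 d3 = (\<lambda>k. if k = 0 then d1 else if k = 1 then d2 else d3)"

definition flat_idx :: "(nat \<Rightarrow> nat) \<Rightarrow> (nat \<Rightarrow> nat) \<Rightarrow> nat" where
  "flat_idx D j = j 0 * D 1 * D 2 + j 1 * D 2 + j 2"

definition vec_space :: "nat \<Rightarrow> (nat \<Rightarrow> complex) measure" where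
  "vec_space d = PiM {..<d} (\<lambda>_. borel)"

definition mat_space :: "nat \<Rightarrow> (nat \<times> nat \<Rightarrow> complex) measure" where
  "mat_space n = PiM ({..<n} \<times> {..<n}) (\<lambda>_. borel)"

definition vnorm :: "nat \<Rightarrow> (nat \<Rightarrow> complex) \<Rightarrow> real" where
  "vnorm d x = sqrt (\<Sum>i<d. (cmod (x i))\<^sup>2)"

text \<open>Uniform (normalised surface) measure on the unit sphere of C^d, realised as the
  cone measure: the image of the uniform distribution on the unit ball under
  radial projection x |-> x / |x|.\<close>
definition sphere_unif :: "nat \<Rightarrow> (nat \<Rightarrow> complex) measure" where
  "sphere_unif d =
     distr (uniform_measure (PiM {..<d} (\<lambda>_. lborel))
              {x \<in> space (PiM {..<d} (\<lambda>_. (lborel :: complex measure))). vnorm d x \<le> 1})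
           (vec_space d)
           (\<lambda>x. restrict (\<lambda>i. x i / complex_of_real (vnorm d x)) {..<d})"

definition unitary_set :: "nat \<Rightarrow> (nat \<times> nat \<Rightarrow> complex) set" where
  "unitary_set n = {U \<in> extensional ({..<n} \<times> {..<n}).
      \<forall>i<n. \<forall>j<n. (\<Sum>k<n. cnj (U (k, i)) * U (k, j)) = (if i = j then 1 else 0)}"

definition mat_mult :: "nat \<Rightarrow> (nat \<times> nat \<Rightarrow> complex) \<Rightarrow> (nat \<times> nat \<Rightarrow> complex)
                         \<Rightarrow> (nat \<times> nat \<Rightarrow> complex)" where
  "mat_mult n V U = restrict (\<lambda>(i, j). \<Sum>k<n. V (i, k) * U (k, j)) ({..<n} \<times> {..<n})"

definition is_haar_unitary :: "nat \<Rightarrow> (nat \<times> nat \<Rightarrow> complex) measure \<Rightarrow> bool" where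
  "is_haar_unitary n \<mu> \<longleftrightarrow>
     prob_space \<mu> \<and> sets \<mu> = sets (mat_space n) \<and>
     emeasure \<mu> (unitary_set n) = 1 \<and>
     (\<forall>V \<in> unitary_set n. distr \<mu> (mat_space n) (mat_mult n V) = \<mu>)"

definition mat_apply :: "nat \<Rightarrow> (nat \<times> nat \<Rightarrow> complex) \<Rightarrow> (nat \<Rightarrow> complex) \<Rightarrow> (nat \<Rightarrow> complex)" where
  "mat_apply n U x = restrict (\<lambda>i. \<Sum>k<n. U (i, k) * x k) {..<n}"

definition prod_vec3 :: "(nat \<Rightarrow> nat) \<Rightarrow> (nat \<Rightarrow> complex) \<Rightarrow> (nat \<Rightarrow> complex) \<Rightarrow> (nat \<Rightarrow> complex)
                          \<Rightarrow> (nat \<Rightarrow> complex)" where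
  "prod_vec3 D x1 x2 x3 =
     restrict (\<lambda>m. x1 (m div (D 1 * D 2)) * x2 ((m div D 2) mod D 1) * x3 (m mod D 2))
              {..<D 0 * D 1 * D 2}"

definition idx_set :: "(nat \<Rightarrow> nat) \<Rightarrow> nat set \<Rightarrow> (nat \<Rightarrow> nat) set" where
  "idx_set D K = PiE K (\<lambda>k. {..<D k})"

definition merge_idx :: "nat set \<Rightarrow> (nat \<Rightarrow> nat) \<Rightarrow> (nat \<Rightarrow> nat) \<Rightarrow> (nat \<Rightarrow> nat)" where
  "merge_idx A a b = (\<lambda>k. if k \<in> A then a k else b k)"

text \<open>Tr ((Tr_B |psi><psi|)^2) with A the kept parties and B = {0,1,2} - A;
  entries of Tr_B |psi><psi| are (a,a') |-> sum_b psi(a,b) conj(psi(a',b)).\<close>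
definition purity :: "(nat \<Rightarrow> nat) \<Rightarrow> nat set \<Rightarrow> (nat \<Rightarrow> complex) \<Rightarrow> real" where
  "purity D A \<psi> =
     (let B = {0,1,2} - A;
          \<rho> = (\<lambda>a a'. \<Sum>b \<in> idx_set D B.
                  \<psi> (flat_idx D (merge_idx A a b)) * cnj (\<psi> (flat_idx D (merge_idx A a' b))))
      in Re (\<Sum>a \<in> idx_set D A. \<Sum>a' \<in> idx_set D A. \<rho> a a' * \<rho> a' a))"

definition tangle :: "(nat \<Rightarrow> nat) \<Rightarrow> nat set \<Rightarrow> (nat \<Rightarrow> complex) \<Rightarrow> real" where
  "tangle D A \<psi> = 2 * (1 - purity D A \<psi>)"

definition one_tangle :: "(nat \<Rightarrow> nat) \<Rightarrow> (nat \<Rightarrow> complex) \<Rightarrow> real" where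
  "one_tangle D \<psi> = (tangle D {0,1} \<psi> + tangle D {0,2} \<psi> + tangle D {1,2} \<psi>) / 3"

definition entangling_power :: "nat \<Rightarrow> nat \<Rightarrow> nat \<Rightarrow> (nat \<times> nat \<Rightarrow> complex) \<Rightarrow> real" where
  "entangling_power d1 d2 d3 U =
     (\<integral>x1. (\<integral>x2. (\<integral>x3.
         one_tangle (dims3 d1 d2 d3)
           (mat_apply (d1 * d2 * d3) U (prod_vec3 (dims3 d1 d2 d3) x1 x2 x3))
       \<partial>sphere_unif d3) \<partial>sphere_unif d2) \<partial>sphere_unif d1)"

end

theory Submission
  imports Defs "HOL-Analysis.Ball_Volume"
begin

text \<open>Fix a product state \<open>\<psi>\<close> and let \<open>w = U\<psi>\<close> with \<open>U\<close> Haar distributed on \<open>U(n)\<close>.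
  Left invariance of the Haar measure determines the fourth moments of \<open>w\<close>:
  diagonal phases kill every monomial \<open>w\<^sub>i w\<^sub>j w\<^sub>k\<^sup>* w\<^sub>l\<^sup>*\<close> unless
  \<open>{i, j} = {k, l}\<close>, coordinate transpositions show that the surviving ones only depend on
  whether \<open>i = j\<close>, a Hadamard rotation gives \<open>E|w\<^sub>0|\<^sup>4 = 2 E|w\<^sub>0 w\<^sub>1|\<^sup>2\<close>, and
  \<open>\<Sum>\<^sub>i |w\<^sub>i|\<^sup>2 = 1\<close> fixes the scale, so that
  \<open>E[w\<^sub>i w\<^sub>j w\<^sub>k\<^sup>* w\<^sub>l\<^sup>*] = (\<delta>\<^sub>i\<^sub>k \<delta>\<^sub>j\<^sub>l + \<delta>\<^sub>i\<^sub>l \<delta>\<^sub>j\<^sub>k) / (n (n + 1))\<close>.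
  The purity of a bipartition \<open>A|B\<close> is a quartic polynomial in \<open>w\<close>, hence its Haar average is
  \<open>(d\<^sub>A + d\<^sub>B) / (n + 1)\<close> independently of \<open>\<psi>\<close>. Averaging over the three bipartitions gives
  the formula for every product state, and Fubini exchanges the Haar average with the average
  over product states.\<close>

lemma component_measurable_UNIV:
  assumes "space M = UNIV"
  shows "(\<lambda>x. x i) \<in> measurable (PiM I (\<lambda>_. M)) M"
proof (cases "i \<in> I")
  case True
  then show ?thesis by (rule measurable_component_singleton)
next
  case False
  then have "x \<in> space (PiM I (\<lambda>_. M)) \<Longrightarrow> x i = undefined" for x
    by (auto simp: space_PiM PiE_def extensional_def)
  then show ?thesis
    using assms by (subst measurable_cong[where g = "\<lambda>_. undefined"]) auto
qed

lemma component_borel_measurable[measurable]: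
  "(\<lambda>x. x i) \<in> borel_measurable (PiM I (\<lambda>_. (borel :: 'b::topological_space measure)))"
  by (rule component_measurable_UNIV) simp

lemma cnj_borel_measurable[measurable (raw)]:
  "f \<in> borel_measurable M \<Longrightarrow> (\<lambda>x. cnj (f x :: complex)) \<in> borel_measurable M"
  by (rule measurable_compose[of f M borel], assumption)
    (intro borel_measurable_continuous_onI continuous_intros)

lemma (in prob_space) norm_integral_le_const:
  fixes f :: "'a \<Rightarrow> 'b::{banach,second_countable_topology}"
  assumes "f \<in> borel_measurable M" "AE x in M. norm (f x) \<le> C"
  shows "norm (\<integral>x. f x \<partial>M) \<le> C"
proof -
  have "integrable M f" using assms integrable_const_bound by blast
  then have "norm (\<integral>x. f x \<partial>M) \<le> (\<integral>x. C \<partial>M)"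
    using assms(2) by (intro order.trans[OF integral_norm_bound] integral_mono_AE) auto
  then show ?thesis by (simp add: prob_space)
qed

lemma integral_sum2:
  fixes g :: "'i \<Rightarrow> 'j \<Rightarrow> 'a \<Rightarrow> 'b::{banach,second_countable_topology}"
  assumes "\<And>a b. a \<in> I \<Longrightarrow> b \<in> J \<Longrightarrow> integrable M (g a b)"
  shows "(\<integral>x. (\<Sum>a\<in>I. \<Sum>b\<in>J. g a b x) \<partial>M) = (\<Sum>a\<in>I. \<Sum>b\<in>J. (\<integral>x. g a b x \<partial>M))"
  using assms by (simp add: Bochner_Integration.integral_sum Bochner_Integration.integrable_sum)

lemma integral_sum4:
  fixes g :: "'i \<Rightarrow> 'j \<Rightarrow> 'k \<Rightarrow> 'l \<Rightarrow> 'a \<Rightarrow> 'b::{banach,second_countable_topology}"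
  assumes "\<And>a b c d. a \<in> I \<Longrightarrow> b \<in> J \<Longrightarrow> c \<in> K \<Longrightarrow> d \<in> L \<Longrightarrow> integrable M (g a b c d)"
  shows "(\<integral>x. (\<Sum>a\<in>I. \<Sum>b\<in>J. \<Sum>c\<in>K. \<Sum>d\<in>L. g a b c d x) \<partial>M)
    = (\<Sum>a\<in>I. \<Sum>b\<in>J. \<Sum>c\<in>K. \<Sum>d\<in>L. (\<integral>x. g a b c d x \<partial>M))"
  using assms by (simp add: integral_sum2 Bochner_Integration.integrable_sum)

lemma integral_iterated_eq_const:
  fixes g :: "'a \<Rightarrow> 'b \<Rightarrow> real"
  assumes "prob_space M" "prob_space N"
    and g[measurable]: "(\<lambda>(x, y). g x y) \<in> borel_measurable (M \<Otimes>\<^sub>M N)"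
    and bound: "AE x in M. AE y in N. \<bar>g x y\<bar> \<le> C"
    and const: "AE y in N. (\<integral>x. g x y \<partial>M) = c"
  shows "(\<integral>x. (\<integral>y. g x y \<partial>N) \<partial>M) = c"
proof -
  interpret M: prob_space M by fact
  interpret N: prob_space N by fact
  interpret pair_sigma_finite M N by unfold_locales
  interpret MN: prob_space "M \<Otimes>\<^sub>M N" by (rule prob_space_pair) unfold_locales
  have "AE p in M \<Otimes>\<^sub>M N. norm ((\<lambda>(x, y). g x y) p) \<le> C"
    using bound by (intro AE_pair_measure) auto
  then have "integrable (M \<Otimes>\<^sub>M N) (\<lambda>(x, y). g x y)"
    by (intro MN.integrable_const_bound) auto
  then have "(\<integral>x. (\<integral>y. g x y \<partial>N) \<partial>M) = (\<integral>y. (\<integral>x. g x y \<partial>M) \<partial>N)"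
    by (rule Fubini_integral[symmetric])
  also have "\<dots> = (\<integral>y. c \<partial>N)"
  proof (rule integral_cong_AE)
    have "(\<lambda>(y, x). g x y) \<in> borel_measurable (N \<Otimes>\<^sub>M M)" by measurable
    then show "(\<lambda>y. \<integral>x. g x y \<partial>M) \<in> borel_measurable N"
      by (intro M.borel_measurable_lebesgue_integral) (simp add: case_prod_beta')
  qed (use const in simp_all)
  finally show ?thesis by (simp add: N.prob_space)
qed

lemma integral_iterated4_eq_const:
  fixes T :: "(('a \<times> 'b) \<times> 'c) \<times> 'd \<Rightarrow> real"
  assumes M: "prob_space M" and N1: "prob_space N1" and N2: "prob_space N2" and N3: "prob_space N3"
    and T[measurable]: "T \<in> borel_measurable (((M \<Otimes>\<^sub>M N1) \<Otimes>\<^sub>M N2) \<Otimes>\<^sub>M N3)"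
    and P: "AE u in M. P u" and Q1: "AE x in N1. Q1 x" and Q2: "AE y in N2. Q2 y"
    and Q3: "AE z in N3. Q3 z"
    and bound: "\<And>u x y z. P u \<Longrightarrow> Q1 x \<Longrightarrow> Q2 y \<Longrightarrow> Q3 z \<Longrightarrow> \<bar>T (((u, x), y), z)\<bar> \<le> C"
    and const: "\<And>x y z. Q1 x \<Longrightarrow> Q2 y \<Longrightarrow> Q3 z \<Longrightarrow> (\<integral>u. T (((u, x), y), z) \<partial>M) = c"
  shows "(\<integral>u. (\<integral>x. (\<integral>y. (\<integral>z. T (((u, x), y), z) \<partial>N3) \<partial>N2) \<partial>N1) \<partial>M) = c"
proof -
  interpret N2: prob_space N2 by fact
  interpret N3: prob_space N3 by fact
  have bound3: "\<bar>\<integral>z. T (((u, x), y), z) \<partial>N3\<bar> \<le> C"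
    if [measurable]: "u \<in> space M" "x \<in> space N1" "y \<in> space N2" and "P u" "Q1 x" "Q2 y" for u x y
  proof -
    have "norm (\<integral>z. T (((u, x), y), z) \<partial>N3) \<le> C"
      by (rule N3.norm_integral_le_const) (measurable, use that Q3 in \<open>auto intro: bound\<close>)
    then show ?thesis by simp
  qed
  have bound2: "\<bar>\<integral>y. \<integral>z. T (((u, x), y), z) \<partial>N3 \<partial>N2\<bar> \<le> C"
    if [measurable]: "u \<in> space M" "x \<in> space N1" and "P u" "Q1 x" for u x
  proof -
    have "norm (\<integral>y. \<integral>z. T (((u, x), y), z) \<partial>N3 \<partial>N2) \<le> C"
      by (rule N2.norm_integral_le_const)
        (measurable, use that Q2 AE_space[of N2] in \<open>auto intro: bound3\<close>)
    then show ?thesis by simp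
  qed
  have level3: "(\<integral>u. (\<integral>z. T (((u, x), y), z) \<partial>N3) \<partial>M) = c"
    if [measurable]: "x \<in> space N1" "y \<in> space N2" and "Q1 x" "Q2 y" for x y
  proof (rule integral_iterated_eq_const[OF M N3, where C=C])
    show "AE u in M. AE z in N3. \<bar>T (((u, x), y), z)\<bar> \<le> C"
      using P by eventually_elim (use Q3 in eventually_elim, use that in \<open>auto intro: bound\<close>)
    show "AE z in N3. (\<integral>u. T (((u, x), y), z) \<partial>M) = c"
      using Q3 by eventually_elim (use that in \<open>auto intro: const\<close>)
  qed measurable
  have level2: "(\<integral>u. (\<integral>y. (\<integral>z. T (((u, x), y), z) \<partial>N3) \<partial>N2) \<partial>M) = c"
    if [measurable]: "x \<in> space N1" and "Q1 x" for x
  proof (rule integral_iterated_eq_const[OF M N2, where C=C])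
    show "AE u in M. AE y in N2. \<bar>\<integral>z. T (((u, x), y), z) \<partial>N3\<bar> \<le> C"
      using P AE_space[of M]
      by eventually_elim (use Q2 AE_space[of N2] in eventually_elim, use that in \<open>auto intro: bound3\<close>)
    show "AE y in N2. (\<integral>u. \<integral>z. T (((u, x), y), z) \<partial>N3 \<partial>M) = c"
      using Q2 AE_space[of N2] by eventually_elim (use that in \<open>auto intro: level3\<close>)
  qed measurable
  show ?thesis
  proof (rule integral_iterated_eq_const[OF M N1, where C=C])
    show "AE u in M. AE x in N1. \<bar>\<integral>y. \<integral>z. T (((u, x), y), z) \<partial>N3 \<partial>N2\<bar> \<le> C"
      using P AE_space[of M]
      by eventually_elim (use Q1 AE_space[of N1] in eventually_elim, auto intro: bound2)
    show "AE x in N1. (\<integral>u. \<integral>y. \<integral>z. T (((u, x), y), z) \<partial>N3 \<partial>N2 \<partial>M) = c"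
      using Q1 AE_space[of N1] by eventually_elim (auto intro: level2)
  qed measurable
qed

section \<open>Unitary matrices\<close>

definition mat_vec :: "nat \<Rightarrow> (nat \<times> nat \<Rightarrow> complex) \<Rightarrow> (nat \<Rightarrow> complex) \<Rightarrow> nat \<Rightarrow> complex" where
  "mat_vec n U v i = (\<Sum>k<n. U (i, k) * v k)"

lemma mat_apply_eq_mat_vec: "i < n \<Longrightarrow> mat_apply n U v i = mat_vec n U v i"
  by (simp add: mat_apply_def mat_vec_def)

lemma mat_vec_measurable[measurable]: "(\<lambda>U. mat_vec n U v i) \<in> borel_measurable (mat_space n)"
  unfolding mat_vec_def mat_space_def by measurable

lemma mat_mult_measurable: "mat_mult n V \<in> mat_space n \<rightarrow>\<^sub>M mat_space n"
  unfolding mat_mult_def mat_space_def by (rule measurable_restrict) (auto simp: split_beta)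

lemma mat_vec_mat_mult:
  assumes "i < n"
  shows "mat_vec n (mat_mult n V U) v i = (\<Sum>l<n. V (i, l) * mat_vec n U v l)"
proof -
  have "mat_vec n (mat_mult n V U) v i = (\<Sum>k<n. \<Sum>l<n. V (i, l) * (U (l, k) * v k))"
    using assms unfolding mat_vec_def mat_mult_def
    by (intro sum.cong) (auto simp: sum_distrib_right mult.assoc)
  also have "\<dots> = (\<Sum>l<n. V (i, l) * mat_vec n U v l)"
    unfolding mat_vec_def by (subst sum.swap) (simp add: sum_distrib_left)
  finally show ?thesis .
qed

lemma unitary_set_orthonormal:
  assumes "U \<in> unitary_set n" "k < n" "l < n"
  shows "(\<Sum>i<n. U (i, k) * cnj (U (i, l))) = (if k = l then 1 else 0)"
  using assms unfolding unitary_set_def by (auto simp: mult.commute)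

lemma unitary_mat_vec_norm:
  assumes "U \<in> unitary_set n"
  shows "(\<Sum>i<n. mat_vec n U v i * cnj (mat_vec n U v i)) = (\<Sum>k<n. v k * cnj (v k))"
proof -
  have "(\<Sum>i<n. mat_vec n U v i * cnj (mat_vec n U v i))
      = (\<Sum>i<n. \<Sum>k<n. \<Sum>l<n. (U (i, k) * cnj (U (i, l))) * (v k * cnj (v l)))"
    unfolding mat_vec_def
    by (simp add: sum_distrib_left sum_distrib_right mult_ac) (intro sum.cong refl sum.swap)
  also have "\<dots> = (\<Sum>k<n. \<Sum>l<n. \<Sum>i<n. (U (i, k) * cnj (U (i, l))) * (v k * cnj (v l)))"
    by (rule trans[OF sum.swap]) (intro sum.cong refl sum.swap)
  also have "\<dots> = (\<Sum>k<n. \<Sum>l<n. (\<Sum>i<n. U (i, k) * cnj (U (i, l))) * (v k * cnj (v l)))"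
    by (simp only: sum_distrib_right)
  also have "\<dots> = (\<Sum>k<n. \<Sum>l<n. if k = l then v k * cnj (v l) else 0)"
    using assms by (intro sum.cong refl) (simp add: unitary_set_orthonormal)
  finally show ?thesis by simp
qed

lemma cmod_le_1_if_unit:
  fixes x :: "nat \<Rightarrow> complex"
  assumes "(\<Sum>i<n. x i * cnj (x i)) = 1" "i < n"
  shows "cmod (x i) \<le> 1"
proof -
  have "complex_of_real (\<Sum>i<n. (cmod (x i))\<^sup>2) = 1"
    using assms(1) by (simp only: of_real_sum complex_norm_square)
  then have "(\<Sum>i<n. (cmod (x i))\<^sup>2) = 1" using of_real_eq_1_iff by blast
  moreover have "(cmod (x i))\<^sup>2 \<le> (\<Sum>i<n. (cmod (x i))\<^sup>2)"
    using assms(2) by (intro member_le_sum) simp_all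
  ultimately show ?thesis by (simp add: power_le_one_iff abs_le_iff)
qed

lemma cmod_mat_apply_le_1:
  assumes "U \<in> unitary_set n" "(\<Sum>k<n. v k * cnj (v k)) = 1" "m < n"
  shows "cmod (mat_apply n U v m) \<le> 1"
  using assms cmod_le_1_if_unit[where x = "mat_vec n U v" and n = n and i = m]
  by (simp add: unitary_mat_vec_norm mat_apply_eq_mat_vec)

definition phase_mat :: "nat \<Rightarrow> nat \<Rightarrow> nat \<times> nat \<Rightarrow> complex" where
  "phase_mat n p =
     restrict (\<lambda>(i, j). if i = j then (if i = p then \<i> else 1) else 0) ({..<n} \<times> {..<n})"

definition transposition_mat :: "nat \<Rightarrow> nat \<Rightarrow> nat \<Rightarrow> nat \<times> nat \<Rightarrow> complex" where
  "transposition_mat n p q =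
     restrict (\<lambda>(i, j). if j = Transposition.transpose p q i then 1 else 0) ({..<n} \<times> {..<n})"

definition hadamard_mat :: "nat \<Rightarrow> nat \<times> nat \<Rightarrow> complex" where
  "hadamard_mat n =
     restrict (\<lambda>(i, j). if i < 2 \<and> j < 2
        then (if i = 1 \<and> j = 1 then - 1 else 1) * complex_of_real (1 / sqrt 2)
        else (if i = j then 1 else 0)) ({..<n} \<times> {..<n})"

lemma transpose_less:
  "p < n \<Longrightarrow> q < n \<Longrightarrow> i < n \<Longrightarrow> Transposition.transpose p q i < n"
  by (simp add: Transposition.transpose_def)

lemma phase_mat_unitary: "phase_mat n p \<in> unitary_set n"
proof -
  have "(\<Sum>k<n. cnj (phase_mat n p (k, i)) * phase_mat n p (k, j)) = (if i = j then 1 else 0)"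
    if "i < n" "j < n" for i j
  proof -
    have "(\<Sum>k<n. cnj (phase_mat n p (k, i)) * phase_mat n p (k, j))
        = (\<Sum>k<n. if k = i then (if i = j then 1 else 0) else 0)"
      using that unfolding phase_mat_def by (intro sum.cong refl) auto
    then show ?thesis using that by simp
  qed
  then show ?thesis unfolding unitary_set_def phase_mat_def by auto
qed

lemma transposition_mat_unitary:
  assumes "p < n" "q < n"
  shows "transposition_mat n p q \<in> unitary_set n"
proof -
  let ?\<tau> = "Transposition.transpose p q"
  have "(\<Sum>k<n. cnj (transposition_mat n p q (k, i)) * transposition_mat n p q (k, j))
      = (if i = j then 1 else 0)" if "i < n" "j < n" for i j
  proof -
    have "(\<Sum>k<n. cnj (transposition_mat n p q (k, i)) * transposition_mat n p q (k, j))
        = (\<Sum>k<n. if k = ?\<tau> i then (if j = ?\<tau> k then 1 else 0) else 0)"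
      using that unfolding transposition_mat_def
      by (intro sum.cong refl) (auto simp: transpose_eq_iff)
    then show ?thesis using that transpose_less[OF assms that(1)] by auto
  qed
  then show ?thesis unfolding unitary_set_def transposition_mat_def by auto
qed

lemma hadamard_mat_unitary:
  assumes "2 \<le> n"
  shows "hadamard_mat n \<in> unitary_set n"
proof -
  have half: "complex_of_real (1 / sqrt 2) * complex_of_real (1 / sqrt 2) = 1 / 2"
    and two: "complex_of_real (sqrt 2) * complex_of_real (sqrt 2) = 2"
    by (simp_all flip: of_real_mult)
  have "(\<Sum>k<n. cnj (hadamard_mat n (k, i)) * hadamard_mat n (k, j)) = (if i = j then 1 else 0)"
    if "i < n" "j < n" for i j
  proof -
    let ?h = "\<lambda>k. cnj (hadamard_mat n (k, i)) * hadamard_mat n (k, j)"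
    have split: "{..<n} = {..<2} \<union> {2..<n}" using assms by auto
    have "(\<Sum>k\<in>{2..<n}. ?h k) = (\<Sum>k\<in>{2..<n}. if k = i \<and> k = j then 1 else 0)"
      using that unfolding hadamard_mat_def by (intro sum.cong refl) auto
    also have "\<dots> = (if i = j \<and> 2 \<le> i then 1 else 0)"
      using that by (cases "i = j") (auto simp: sum.delta intro!: sum.neutral)
    finally have "(\<Sum>k<n. ?h k) = ?h 0 + ?h 1 + (if i = j \<and> 2 \<le> i then 1 else 0)"
      unfolding split by (subst sum.union_disjoint) (auto simp: numeral_2_eq_2)
    then show ?thesis
      using that assms unfolding hadamard_mat_def by (cases "i < 2"; cases "j < 2") (auto simp: half two)
  qed
  then show ?thesis unfolding unitary_set_def hadamard_mat_def by auto
qed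

lemma mat_vec_phase_mat:
  "i < n \<Longrightarrow> mat_vec n (mat_mult n (phase_mat n p) U) v i = (if i = p then \<i> else 1) * mat_vec n U v i"
  by (simp add: mat_vec_mat_mult phase_mat_def if_distrib[where f = "\<lambda>x. x * _"] sum.delta cong: if_cong)

lemma mat_vec_transposition_mat:
  assumes "p < n" "q < n" "i < n"
  shows "mat_vec n (mat_mult n (transposition_mat n p q) U) v i
    = mat_vec n U v (Transposition.transpose p q i)"
  using transpose_less[OF assms]
  by (simp add: mat_vec_mat_mult[OF assms(3)] transposition_mat_def assms(3)
      if_distrib[where f = "\<lambda>x. x * _"] sum.delta cong: if_cong)

lemma mat_vec_hadamard_mat:
  assumes "2 \<le> n"
  shows "mat_vec n (mat_mult n (hadamard_mat n) U) v 0
    = complex_of_real (1 / sqrt 2) * (mat_vec n U v 0 + mat_vec n U v 1)"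
proof -
  have "mat_vec n (mat_mult n (hadamard_mat n) U) v 0
      = (\<Sum>l\<in>{..<n} \<inter> {..<2}. complex_of_real (1 / sqrt 2) * mat_vec n U v l)"
    using assms by (simp add: mat_vec_mat_mult hadamard_mat_def sum.inter_restrict if_distrib[where f = "\<lambda>x. x * _"] cong: if_cong)
  also have "{..<n} \<inter> {..<2} = {..<2::nat}" using assms by auto
  finally show ?thesis by (simp add: numeral_2_eq_2 distrib_left)
qed

section \<open>Fourth moments of a Haar-random unitary applied to a unit vector\<close>

lemma integral_mat_mult_haar:
  fixes f :: "_ \<Rightarrow> 'b::{banach,second_countable_topology}"
  assumes haar: "is_haar_unitary n \<mu>" and V: "V \<in> unitary_set n"
    and f: "f \<in> borel_measurable (mat_space n)"
  shows "(\<integral>U. f (mat_mult n V U) \<partial>\<mu>) = (\<integral>U. f U \<partial>\<mu>)"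
proof -
  have sets: "sets \<mu> = sets (mat_space n)" and distr: "distr \<mu> (mat_space n) (mat_mult n V) = \<mu>"
    using haar V unfolding is_haar_unitary_def by auto
  have "mat_mult n V \<in> \<mu> \<rightarrow>\<^sub>M mat_space n"
    using mat_mult_measurable measurable_cong_sets[OF sets refl] by blast
  then have "(\<integral>U. f (mat_mult n V U) \<partial>\<mu>) = (\<integral>U. f U \<partial>distr \<mu> (mat_space n) (mat_mult n V))"
    using f by (rule integral_distr[symmetric])
  then show ?thesis unfolding distr .
qed

lemma AE_unitary_haar:
  assumes "is_haar_unitary n \<mu>"
  shows "AE U in \<mu>. U \<in> unitary_set n"
proof -
  interpret prob_space \<mu> using assms by (simp add: is_haar_unitary_def)
  have measure: "emeasure \<mu> (unitary_set n) = 1" using assms by (simp add: is_haar_unitary_def)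
  then have "unitary_set n \<in> sets \<mu>" using emeasure_notin_sets by force
  then show ?thesis using measure AE_in_set_eq_1 by (simp add: emeasure_eq_measure)
qed

locale haar_column =
  fixes n :: nat and \<mu> :: "(nat \<times> nat \<Rightarrow> complex) measure" and v :: "nat \<Rightarrow> complex"
  assumes haar: "is_haar_unitary n \<mu>"
    and unit_vec: "(\<Sum>k<n. v k * cnj (v k)) = 1"
    and two_le_n: "2 \<le> n"
begin

sublocale prob_space \<mu>
  using haar by (simp add: is_haar_unitary_def)

lemma sets_haar[measurable_cong]: "sets \<mu> = sets (mat_space n)"
  using haar by (simp add: is_haar_unitary_def)

abbreviation w :: "(nat \<times> nat \<Rightarrow> complex) \<Rightarrow> nat \<Rightarrow> complex" where
  "w U i \<equiv> mat_vec n U v i"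

lemma AE_w_unit: "AE U in \<mu>. (\<Sum>i<n. w U i * cnj (w U i)) = 1"
  using AE_unitary_haar[OF haar] by eventually_elim (simp add: unitary_mat_vec_norm unit_vec)

lemma AE_cmod_w_le_1: "AE U in \<mu>. \<forall>i<n. cmod (w U i) \<le> 1"
  using AE_w_unit by eventually_elim (auto intro: cmod_le_1_if_unit)

definition quartic :: "(nat \<times> nat \<Rightarrow> complex) \<Rightarrow> nat \<Rightarrow> nat \<Rightarrow> nat \<Rightarrow> nat \<Rightarrow> complex" where
  "quartic U i j k l = w U i * w U j * cnj (w U k) * cnj (w U l)"

definition moment :: "nat \<Rightarrow> nat \<Rightarrow> nat \<Rightarrow> nat \<Rightarrow> complex" where
  "moment i j k l = (\<integral>U. quartic U i j k l \<partial>\<mu>)"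

lemma quartic_measurable[measurable]: "(\<lambda>U. quartic U i j k l) \<in> borel_measurable (mat_space n)"
  unfolding quartic_def by measurable

lemma integrable_quartic:
  assumes "i < n" "j < n" "k < n" "l < n"
  shows "integrable \<mu> (\<lambda>U. quartic U i j k l)"
proof (rule integrable_const_bound[where B = 1])
  show "AE U in \<mu>. norm (quartic U i j k l) \<le> 1"
    using AE_cmod_w_le_1 by eventually_elim
      (use assms in \<open>auto simp: quartic_def norm_mult intro!: mult_le_one\<close>)
qed measurable

lemma moment_mat_mult:
  "V \<in> unitary_set n \<Longrightarrow> moment i j k l = (\<integral>U. quartic (mat_mult n V U) i j k l \<partial>\<mu>)"
  unfolding moment_def by (rule integral_mat_mult_haar[OF haar, symmetric]) measurable

lemma moment_transpose:
  assumes "p < n" "q < n" "i < n" "j < n" "k < n" "l < n"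
  defines "\<tau> \<equiv> Transposition.transpose p q"
  shows "moment (\<tau> i) (\<tau> j) (\<tau> k) (\<tau> l) = moment i j k l"
  using moment_mat_mult[OF transposition_mat_unitary[OF assms(1,2)], of i j k l]
  by (simp add: moment_def quartic_def mat_vec_transposition_mat assms \<tau>_def)

lemma moment_phase:
  fixes p :: nat
  assumes "i < n" "j < n" "k < n" "l < n"
  defines "\<phi> x \<equiv> if x = p then \<i> else 1"
  shows "moment i j k l = \<phi> i * \<phi> j * cnj (\<phi> k) * cnj (\<phi> l) * moment i j k l"
proof -
  have "moment i j k l = (\<integral>U. \<phi> i * \<phi> j * cnj (\<phi> k) * cnj (\<phi> l) * quartic U i j k l \<partial>\<mu>)"
    using moment_mat_mult[OF phase_mat_unitary, of i j k l]
    by (simp add: quartic_def mat_vec_phase_mat assms mult_ac)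
  then show ?thesis by (simp add: moment_def)
qed

text \<open>The phase on coordinate \<open>p\<close> multiplies the moment by \<open>\<i>\<close> to the number of occurrences
  of \<open>p\<close> among \<open>i, j\<close> minus that among \<open>k, l\<close>; taking \<open>p = i\<close> and \<open>p = j\<close> forces
  \<open>{i, j} = {k, l}\<close> as multisets.\<close>

lemma moment_unbalanced:
  assumes "i < n" "j < n" "k < n" "l < n" "\<not> ((i = k \<and> j = l) \<or> (i = l \<and> j = k))"
  shows "moment i j k l = 0"
proof (rule ccontr)
  assume nonzero: "moment i j k l \<noteq> 0"
  have "(if i = x then \<i> else 1) * (if j = x then \<i> else 1)
      * cnj (if k = x then \<i> else 1) * cnj (if l = x then \<i> else 1) = 1" for x
    using moment_phase[OF assms(1-4), of x] nonzero unfolding mult_cancel_right1 by blast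
  from this[of i] this[of j] assms(5) show False
    by (cases "i = j"; cases "k = i"; cases "l = i"; cases "k = j"; cases "l = j") auto
qed

lemma moment_swap_right: "moment i j k l = moment i j l k"
  by (simp add: moment_def quartic_def mult_ac)

definition diag_moment :: complex where "diag_moment = moment 0 0 0 0"
definition offdiag_moment :: complex where "offdiag_moment = moment 0 1 0 1"

lemma moment_diag: "i < n \<Longrightarrow> moment i i i i = diag_moment"
  using moment_transpose[of 0 i 0 0 0 0] two_le_n by (simp add: diag_moment_def)

lemma moment_0_offdiag: "j < n \<Longrightarrow> j \<noteq> 0 \<Longrightarrow> moment 0 j 0 j = offdiag_moment"
  using moment_transpose[of 1 j 0 1 0 1] two_le_n by (simp add: offdiag_moment_def)

lemma moment_offdiag:
  assumes "i < n" "j < n" "i \<noteq> j"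
  shows "moment i j i j = offdiag_moment"
proof -
  let ?\<sigma> = "Transposition.transpose 0 i"
  have "?\<sigma> j < n" "?\<sigma> j \<noteq> 0"
    using assms transpose_less[of 0 n i j] by (auto simp: transpose_eq_iff)
  then have "moment (?\<sigma> i) (?\<sigma> j) (?\<sigma> i) (?\<sigma> j) = offdiag_moment"
    by (simp add: moment_0_offdiag)
  then show ?thesis using moment_transpose[of 0 i i j i j] assms by simp
qed

lemma moment_cases:
  assumes "i < n" "j < n" "k < n" "l < n"
  shows "moment i j k l = (if (i = k \<and> j = l) \<or> (i = l \<and> j = k)
    then (if i = j then diag_moment else offdiag_moment) else 0)"
  using assms moment_unbalanced[OF assms] moment_diag[of i] moment_offdiag[of i j]
    moment_swap_right[of i j j i]
  by auto

lemma quartic_hadamard: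
  "quartic (mat_mult n (hadamard_mat n) U) 0 0 0 0
    = (1 / 4) * (\<Sum>a<2. \<Sum>b<2. \<Sum>c<2. \<Sum>d<2. quartic U a b c d)"
proof -
  define r where "r = complex_of_real (1 / sqrt 2)"
  have rr: "r * r = 1 / 2" and cnj_r: "cnj r = r" unfolding r_def by (simp_all flip: of_real_mult)
  let ?x = "w U 0" and ?y = "w U 1"
  have "quartic (mat_mult n (hadamard_mat n) U) 0 0 0 0
      = (r * r) * (r * r) * ((?x + ?y) * (?x + ?y) * (cnj ?x + cnj ?y) * (cnj ?x + cnj ?y))"
    unfolding quartic_def mat_vec_hadamard_mat[OF two_le_n] r_def[symmetric]
    by (simp add: cnj_r mult_ac)
  also have "\<dots> = (1 / 4) * (\<Sum>a<2. \<Sum>b<2. \<Sum>c<2. \<Sum>d<2. quartic U a b c d)"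
    unfolding rr quartic_def by (simp add: numeral_2_eq_2 algebra_simps)
  finally show ?thesis .
qed

text \<open>Hadamard invariance: \<open>E|w\<^sub>0|\<^sup>4 = E|w\<^sub>0 + w\<^sub>1|\<^sup>4 / 4 = (2 E|w\<^sub>0|\<^sup>4 + 4 E|w\<^sub>0 w\<^sub>1|\<^sup>2) / 4\<close>.\<close>

lemma diag_moment_eq_twice_offdiag: "diag_moment = 2 * offdiag_moment"
proof -
  have "diag_moment = (\<integral>U. (1 / 4) * (\<Sum>a<2. \<Sum>b<2. \<Sum>c<2. \<Sum>d<2. quartic U a b c d) \<partial>\<mu>)"
    using moment_mat_mult[OF hadamard_mat_unitary[OF two_le_n], of 0 0 0 0]
    by (simp add: diag_moment_def quartic_hadamard)
  also have "\<dots> = (1 / 4) * (\<Sum>a<2. \<Sum>b<2. \<Sum>c<2. \<Sum>d<2. moment a b c d)"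
    unfolding integral_mult_right_zero moment_def using two_le_n
    by (subst integral_sum4) (auto intro: integrable_quartic)
  also have "\<dots> = (1 / 4) * (2 * diag_moment + 4 * offdiag_moment)"
    using two_le_n by (simp add: moment_cases numeral_2_eq_2)
  finally show ?thesis by simp
qed

lemma sum_balanced_moments: "(\<Sum>i<n. \<Sum>j<n. moment i j i j) = 1"
proof -
  have "(\<Sum>i<n. \<Sum>j<n. moment i j i j) = (\<integral>U. (\<Sum>i<n. \<Sum>j<n. quartic U i j i j) \<partial>\<mu>)"
    unfolding moment_def by (subst integral_sum2) (auto intro: integrable_quartic)
  also have "\<dots> = (\<integral>U. 1 \<partial>\<mu>)"
  proof (rule integral_cong_AE)
    show "AE U in \<mu>. (\<Sum>i<n. \<Sum>j<n. quartic U i j i j) = 1"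
      using AE_w_unit
    proof eventually_elim
      case (elim U)
      have "(\<Sum>i<n. \<Sum>j<n. quartic U i j i j)
          = (\<Sum>i<n. w U i * cnj (w U i)) * (\<Sum>j<n. w U j * cnj (w U j))"
        unfolding quartic_def sum_product by (simp add: mult_ac)
      with elim show ?case by simp
    qed
  qed measurable
  finally show ?thesis by (simp add: prob_space)
qed

lemma offdiag_moment_value: "offdiag_moment = 1 / (of_nat n * (of_nat n + 1))"
proof -
  have row: "(\<Sum>j<n. moment i j i j) = (of_nat n + 1) * offdiag_moment" if "i < n" for i
  proof -
    have "(\<Sum>j<n. moment i j i j) = (\<Sum>j<n. offdiag_moment + (if i = j then offdiag_moment else 0))"
      using that by (intro sum.cong refl) (simp add: moment_cases diag_moment_eq_twice_offdiag)
    then show ?thesis using that by (simp add: sum.distrib algebra_simps)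
  qed
  have "offdiag_moment * (of_nat n * (of_nat n + 1)) = 1"
    using sum_balanced_moments by (simp add: row mult_ac)
  moreover have "(of_nat n * (of_nat n + 1) :: complex) \<noteq> 0"
  proof -
    have "(of_nat n * (of_nat n + 1) :: complex) = of_nat (n * Suc n)" by (simp add: algebra_simps)
    then show ?thesis using two_le_n by (simp only: of_nat_eq_0_iff) simp
  qed
  ultimately show ?thesis by (simp add: eq_divide_eq)
qed

theorem moment_formula:
  assumes "i < n" "j < n" "k < n" "l < n"
  shows "moment i j k l = ((if i = k \<and> j = l then 1 else 0) + (if i = l \<and> j = k then 1 else 0))
    / (of_nat n * (of_nat n + 1))"
  using assms
  by (simp add: moment_cases diag_moment_eq_twice_offdiag offdiag_moment_value)

end

section \<open>Purities as quartic polynomials\<close>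

lemma flat_idx_eq: "flat_idx D j = (j 0 * D 1 + j 1) * D 2 + j 2"
  by (simp add: flat_idx_def algebra_simps)

lemma flat_idx_less:
  assumes "j 0 < D 0" "j 1 < D 1" "j 2 < D 2"
  shows "flat_idx D j < D 0 * D 1 * D 2"
proof -
  have "j 0 * D 1 + j 1 < D 0 * D 1"
    using assms(2) mult_right_mono[of "Suc (j 0)" "D 0" "D 1"] assms(1) by simp
  then have "(j 0 * D 1 + j 1) * D 2 + j 2 < D 0 * D 1 * D 2"
    using assms(3) mult_right_mono[of "Suc (j 0 * D 1 + j 1)" "D 0 * D 1" "D 2"] by simp
  then show ?thesis by (simp add: flat_idx_eq)
qed

lemma flat_idx_eq_iff:
  assumes "j 1 < D 1" "j 2 < D 2" "j' 1 < D 1" "j' 2 < D 2"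
  shows "flat_idx D j = flat_idx D j' \<longleftrightarrow> j 0 = j' 0 \<and> j 1 = j' 1 \<and> j 2 = j' 2"
proof
  assume eq: "flat_idx D j = flat_idx D j'"
  then have "(j 0 * D 1 + j 1) * D 2 + j 2 = (j' 0 * D 1 + j' 1) * D 2 + j' 2"
    by (simp add: flat_idx_eq)
  from arg_cong[OF this, of "\<lambda>x. x mod D 2"] arg_cong[OF this, of "\<lambda>x. x div D 2"]
  have "j 2 = j' 2" and hi: "j 0 * D 1 + j 1 = j' 0 * D 1 + j' 1"
    using assms by simp_all
  moreover from arg_cong[OF hi, of "\<lambda>x. x mod D 1"] arg_cong[OF hi, of "\<lambda>x. x div D 1"]
  have "j 1 = j' 1" "j 0 = j' 0"
    using assms by simp_all
  ultimately show "j 0 = j' 0 \<and> j 1 = j' 1 \<and> j 2 = j' 2" by simp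
qed (simp add: flat_idx_def)

lemma card_idx_set: "finite K \<Longrightarrow> card (idx_set D K) = (\<Prod>k\<in>K. D k)"
  by (simp add: idx_set_def card_PiE)

lemma finite_idx_set: "finite K \<Longrightarrow> finite (idx_set D K)"
  by (simp add: idx_set_def finite_PiE)

context
  fixes D :: "nat \<Rightarrow> nat" and A :: "nat set"
  assumes A_parties: "A \<subseteq> {0, 1, 2}"
begin

lemma card_idx_set_bipartition:
  "card (idx_set D A) * card (idx_set D ({0, 1, 2} - A)) = D 0 * D 1 * D 2"
proof -
  have "finite A" using A_parties finite_subset by blast
  moreover have "(\<Prod>k\<in>{0, 1, 2}. D k) = (\<Prod>k\<in>{0, 1, 2} - A. D k) * (\<Prod>k\<in>A. D k)"
    by (rule prod.subset_diff[OF A_parties]) simp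
  ultimately show ?thesis by (simp add: card_idx_set mult_ac)
qed

lemma merge_idx_less:
  assumes "a \<in> idx_set D A" "b \<in> idx_set D ({0, 1, 2} - A)" "k \<in> {0, 1, 2}"
  shows "merge_idx A a b k < D k"
  using assms unfolding merge_idx_def idx_set_def by (auto simp: PiE_iff)

lemma flat_merge_less:
  assumes "a \<in> idx_set D A" "b \<in> idx_set D ({0, 1, 2} - A)"
  shows "flat_idx D (merge_idx A a b) < D 0 * D 1 * D 2"
  using merge_idx_less[OF assms] by (intro flat_idx_less) auto

lemma flat_merge_eq_iff:
  assumes a: "a \<in> idx_set D A" "a' \<in> idx_set D A"
    and b: "b \<in> idx_set D ({0, 1, 2} - A)" "b' \<in> idx_set D ({0, 1, 2} - A)"
  shows "flat_idx D (merge_idx A a b) = flat_idx D (merge_idx A a' b') \<longleftrightarrow> a = a' \<and> b = b'"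
proof
  assume eq: "flat_idx D (merge_idx A a b) = flat_idx D (merge_idx A a' b')"
  have "merge_idx A a b k < D k" "merge_idx A a' b' k < D k" if "k \<in> {0, 1, 2}" for k
    using merge_idx_less a b that by blast+
  with eq have merge: "merge_idx A a b k = merge_idx A a' b' k" if "k \<in> {0, 1, 2}" for k
    using that by (subst (asm) flat_idx_eq_iff) auto
  have "a = a'"
  proof (rule ext)
    fix k
    show "a k = a' k"
    proof (cases "k \<in> A")
      case True
      then have "merge_idx A a b k = merge_idx A a' b' k" using A_parties by (intro merge) blast
      then show ?thesis using True by (simp add: merge_idx_def)
    next
      case False
      then show ?thesis using a PiE_arb unfolding idx_set_def by metis
    qed
  qed
  moreover have "b = b'"
  proof (rule ext)
    fix k
    show "b k = b' k"
    proof (cases "k \<in> {0, 1, 2} - A")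
      case True
      then have "merge_idx A a b k = merge_idx A a' b' k" by (intro merge) blast
      then show ?thesis using True by (simp add: merge_idx_def)
    next
      case False
      then show ?thesis using b PiE_arb unfolding idx_set_def by metis
    qed
  qed
  ultimately show "a = a' \<and> b = b'" ..
qed simp

end

lemma purity_expand:
  "purity D A \<psi> = Re (\<Sum>a\<in>idx_set D A. \<Sum>a'\<in>idx_set D A.
     \<Sum>b\<in>idx_set D ({0, 1, 2} - A). \<Sum>b'\<in>idx_set D ({0, 1, 2} - A).
       \<psi> (flat_idx D (merge_idx A a b)) * \<psi> (flat_idx D (merge_idx A a' b'))
       * cnj (\<psi> (flat_idx D (merge_idx A a' b))) * cnj (\<psi> (flat_idx D (merge_idx A a b'))))"
  unfolding purity_def Let_def by (simp add: sum_product mult_ac)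

lemma abs_purity_le:
  assumes A: "A \<subseteq> {0, 1, 2}" and bound: "\<And>m. m < D 0 * D 1 * D 2 \<Longrightarrow> cmod (\<psi> m) \<le> 1"
  shows "\<bar>purity D A \<psi>\<bar> \<le> real ((D 0 * D 1 * D 2)\<^sup>2)"
proof -
  let ?IA = "idx_set D A" and ?IB = "idx_set D ({0, 1, 2} - A)"
  let ?\<psi> = "\<lambda>a b. \<psi> (flat_idx D (merge_idx A a b))"
  have term_le: "cmod (?\<psi> a b * ?\<psi> a' b' * cnj (?\<psi> a' b) * cnj (?\<psi> a b')) \<le> 1"
    if "a \<in> ?IA" "a' \<in> ?IA" "b \<in> ?IB" "b' \<in> ?IB" for a a' b b'
    using that bound flat_merge_less[OF A, where D = D]
    by (auto simp: norm_mult intro!: mult_le_one)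
  have "\<bar>purity D A \<psi>\<bar> \<le> cmod (\<Sum>a\<in>?IA. \<Sum>a'\<in>?IA. \<Sum>b\<in>?IB. \<Sum>b'\<in>?IB.
      ?\<psi> a b * ?\<psi> a' b' * cnj (?\<psi> a' b) * cnj (?\<psi> a b'))"
    unfolding purity_expand by (rule abs_Re_le_cmod)
  also have "\<dots> \<le> (\<Sum>a\<in>?IA. \<Sum>a'\<in>?IA. \<Sum>b\<in>?IB. \<Sum>b'\<in>?IB.
      cmod (?\<psi> a b * ?\<psi> a' b' * cnj (?\<psi> a' b) * cnj (?\<psi> a b')))"
    by (rule order.trans[OF norm_sum] sum_mono)+ (rule order.refl)
  also have "\<dots> \<le> (\<Sum>a\<in>?IA. \<Sum>a'\<in>?IA. \<Sum>b\<in>?IB. \<Sum>b'\<in>?IB. 1)"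
    by (intro sum_mono term_le)
  also have "\<dots> = real ((card ?IA * card ?IB)\<^sup>2)" by (simp add: power2_eq_square)
  finally show ?thesis by (simp only: card_idx_set_bipartition[OF A])
qed

lemma abs_one_tangle_le:
  assumes "\<And>m. m < D 0 * D 1 * D 2 \<Longrightarrow> cmod (\<psi> m) \<le> 1"
  shows "\<bar>one_tangle D \<psi>\<bar> \<le> 2 + 2 * real ((D 0 * D 1 * D 2)\<^sup>2)"
  using abs_purity_le[of "{0, 1}" D \<psi>] abs_purity_le[of "{0, 2}" D \<psi>]
    abs_purity_le[of "{1, 2}" D \<psi>] assms
  by (simp add: one_tangle_def tangle_def abs_le_iff)

context haar_column
begin

context
  fixes D :: "nat \<Rightarrow> nat" and A :: "nat set"
  assumes n_eq: "n = D 0 * D 1 * D 2" and A_parties: "A \<subseteq> {0, 1, 2}"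
begin

abbreviation (input) joint_idx :: "(nat \<Rightarrow> nat) \<Rightarrow> (nat \<Rightarrow> nat) \<Rightarrow> nat" where
  "joint_idx a b \<equiv> flat_idx D (merge_idx A a b)"

lemma joint_idx_less:
  "a \<in> idx_set D A \<Longrightarrow> b \<in> idx_set D ({0, 1, 2} - A) \<Longrightarrow> joint_idx a b < n"
  unfolding n_eq by (rule flat_merge_less[OF A_parties])

definition purity_quartic :: "(nat \<times> nat \<Rightarrow> complex) \<Rightarrow> complex" where
  "purity_quartic U = (\<Sum>a\<in>idx_set D A. \<Sum>a'\<in>idx_set D A.
     \<Sum>b\<in>idx_set D ({0, 1, 2} - A). \<Sum>b'\<in>idx_set D ({0, 1, 2} - A).
       quartic U (joint_idx a b) (joint_idx a' b') (joint_idx a' b) (joint_idx a b'))"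

lemma purity_mat_apply: "purity D A (mat_apply n U v) = Re (purity_quartic U)"
  unfolding purity_expand purity_quartic_def quartic_def
  by (intro arg_cong[where f = Re] sum.cong refl) (simp add: mat_apply_eq_mat_vec joint_idx_less)

lemma integrable_purity_quartic: "integrable \<mu> purity_quartic"
  unfolding purity_quartic_def
  by (auto intro!: Bochner_Integration.integrable_sum integrable_quartic joint_idx_less)

lemma integral_purity_quartic:
  "(\<integral>U. purity_quartic U \<partial>\<mu>)
    = of_nat (card (idx_set D A) + card (idx_set D ({0, 1, 2} - A))) / (of_nat n + 1)"
proof -
  let ?IA = "idx_set D A" and ?IB = "idx_set D ({0, 1, 2} - A)"
  have fin: "finite ?IA" "finite ?IB"
    using A_parties by (auto intro: finite_idx_set finite_subset)
  have "(\<integral>U. purity_quartic U \<partial>\<mu>) = (\<Sum>a\<in>?IA. \<Sum>a'\<in>?IA. \<Sum>b\<in>?IB. \<Sum>b'\<in>?IB.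
      moment (joint_idx a b) (joint_idx a' b') (joint_idx a' b) (joint_idx a b'))"
    unfolding purity_quartic_def moment_def
    by (subst integral_sum4) (blast intro: integrable_quartic joint_idx_less)+
  also have "\<dots> = (\<Sum>a\<in>?IA. \<Sum>a'\<in>?IA. \<Sum>b\<in>?IB. \<Sum>b'\<in>?IB.
      ((if a = a' then 1 else 0) + (if b = b' then 1 else 0)) / (of_nat n * (of_nat n + 1)))"
    by (intro sum.cong refl)
      (auto simp: moment_formula joint_idx_less flat_merge_eq_iff[OF A_parties, where D = D])
  also have "\<dots> = of_nat (card ?IA * card ?IB * (card ?IA + card ?IB)) / (of_nat n * (of_nat n + 1))"
  proof -
    have diag: "(\<Sum>x\<in>I. \<Sum>y\<in>I. if x = y then 1 else 0 :: complex) = of_nat (card I)"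
      if "finite I" for I :: "(nat \<Rightarrow> nat) set"
      using that by simp
    have "(\<Sum>a\<in>?IA. \<Sum>a'\<in>?IA. \<Sum>b\<in>?IB. \<Sum>b'\<in>?IB. (if a = a' then 1 else 0 :: complex))
        = (\<Sum>a\<in>?IA. \<Sum>a'\<in>?IA. if a = a' then 1 else 0) * of_nat (card ?IB * card ?IB)"
      by (simp add: sum_distrib_right mult_ac)
    moreover have "(\<Sum>a\<in>?IA. \<Sum>a'\<in>?IA. \<Sum>b\<in>?IB. \<Sum>b'\<in>?IB. (if b = b' then 1 else 0 :: complex))
        = of_nat (card ?IA * card ?IA) * (\<Sum>b\<in>?IB. \<Sum>b'\<in>?IB. if b = b' then 1 else 0)"
      by simp
    ultimately show ?thesis
      using fin by (simp add: sum_divide_distrib[symmetric] sum.distrib diag algebra_simps)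
  qed
  also have "\<dots> = of_nat (card ?IA + card ?IB) / (of_nat n + 1)"
    using two_le_n
    by (simp only: card_idx_set_bipartition[OF A_parties] n_eq[symmetric]) (simp add: of_nat_mult)
  finally show ?thesis .
qed

lemma integrable_purity: "integrable \<mu> (\<lambda>U. purity D A (mat_apply n U v))"
  unfolding purity_mat_apply using integrable_purity_quartic by simp

lemma integral_purity:
  "(\<integral>U. purity D A (mat_apply n U v) \<partial>\<mu>)
    = real (card (idx_set D A) + card (idx_set D ({0, 1, 2} - A))) / (real n + 1)"
proof -
  have "(of_nat k / (of_nat n + 1) :: complex) = of_real (real k / (real n + 1))" for k
    by simp
  then show ?thesis
    unfolding purity_mat_apply integral_Re[OF integrable_purity_quartic] integral_purity_quartic
    by (simp only: Re_complex_of_real)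
qed

end

theorem integral_one_tangle:
  assumes n_eq: "n = D 0 * D 1 * D 2"
  shows "(\<integral>U. one_tangle D (mat_apply n U v) \<partial>\<mu>)
    = (3 * real n + 3 - D 0 - D 1 - D 2 - D 0 * D 1 - D 0 * D 2 - D 1 * D 2)
      / ((3 / 2) * (real n + 1))"
proof -
  have arith: "2 - 2 / 3 * (S / K) = (3 * K - S) / ((3 / 2) * K)" if "K > 0" for S K :: real
    using that by (simp add: field_simps)
  have parties: "{0, 1, 2} - {0, 1} = {2::nat}" "{0, 1, 2} - {0, 2} = {1::nat}"
    "{0, 1, 2} - {1, 2} = {0::nat}" by auto
  have one_tangle_purities: "one_tangle D \<psi>
      = 2 - 2 / 3 * (purity D {0, 1} \<psi> + purity D {0, 2} \<psi> + purity D {1, 2} \<psi>)" for \<psi>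
    by (simp add: one_tangle_def tangle_def field_simps)
  have "(\<integral>U. one_tangle D (mat_apply n U v) \<partial>\<mu>)
      = 2 - 2 / 3 * ((\<integral>U. purity D {0, 1} (mat_apply n U v) \<partial>\<mu>)
        + (\<integral>U. purity D {0, 2} (mat_apply n U v) \<partial>\<mu>)
        + (\<integral>U. purity D {1, 2} (mat_apply n U v) \<partial>\<mu>))"
    unfolding one_tangle_purities using integrable_purity[OF n_eq] by (simp add: prob_space)
  also have "\<dots> = 2 - 2 / 3 * ((D 0 * D 1 + D 2 + (D 0 * D 2 + D 1) + (D 1 * D 2 + D 0)) / (real n + 1))"
    using integral_purity[OF n_eq, of "{0, 1}"] integral_purity[OF n_eq, of "{0, 2}"]
      integral_purity[OF n_eq, of "{1, 2}"]
    unfolding parties by (simp add: card_idx_set add_divide_distrib)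
  also have "\<dots> = (3 * (real n + 1) - (D 0 * D 1 + D 2 + (D 0 * D 2 + D 1) + (D 1 * D 2 + D 0)))
      / ((3 / 2) * (real n + 1))"
    by (rule arith) simp
  finally show ?thesis by (simp add: algebra_simps)
qed

end

section \<open>Random product states\<close>

lemma vnorm_measurable[measurable]:
  "(\<lambda>x. vnorm d x) \<in> borel_measurable (PiM I (\<lambda>_. (lborel :: complex measure)))"
  unfolding vnorm_def by measurable

lemma unit_sum_if_vnorm_eq_1: "vnorm d x = 1 \<Longrightarrow> (\<Sum>i<d. x i * cnj (x i)) = 1"
proof -
  assume "vnorm d x = 1"
  then have "(\<Sum>i<d. (cmod (x i))\<^sup>2) = 1" unfolding vnorm_def by (simp add: real_sqrt_eq_1_iff)
  then have "complex_of_real (\<Sum>i<d. (cmod (x i))\<^sup>2) = 1" by simp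
  then show ?thesis by (simp only: of_real_sum complex_norm_square)
qed

definition unit_ball :: "nat \<Rightarrow> (nat \<Rightarrow> complex) set" where
  "unit_ball d = {x \<in> space (PiM {..<d} (\<lambda>_. lborel)). vnorm d x \<le> 1}"

definition vnormalize :: "nat \<Rightarrow> (nat \<Rightarrow> complex) \<Rightarrow> nat \<Rightarrow> complex" where
  "vnormalize d x = restrict (\<lambda>i. x i / complex_of_real (vnorm d x)) {..<d}"

lemma sphere_unif_eq_distr:
  "sphere_unif d = distr (uniform_measure (PiM {..<d} (\<lambda>_. lborel)) (unit_ball d)) (vec_space d) (vnormalize d)"
  unfolding sphere_unif_def unit_ball_def vnormalize_def ..

lemma sets_sphere_unif[measurable_cong]: "sets (sphere_unif d) = sets (vec_space d)"
  by (simp add: sphere_unif_eq_distr)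

lemma unit_ball_sets: "unit_ball d \<in> sets (PiM {..<d} (\<lambda>_. lborel))"
  unfolding unit_ball_def by measurable

lemma vnormalize_measurable: "vnormalize d \<in> PiM {..<d} (\<lambda>_. lborel) \<rightarrow>\<^sub>M vec_space d"
  unfolding vnormalize_def vec_space_def by (rule measurable_restrict) measurable

lemma vnorm_vnormalize:
  assumes "vnorm d x \<noteq> 0"
  shows "vnorm d (vnormalize d x) = 1"
proof -
  define S where "S = (\<Sum>i<d. (cmod (x i))\<^sup>2)"
  have "S \<ge> 0" unfolding S_def by (intro sum_nonneg) auto
  moreover have norm_eq: "vnorm d x = sqrt S" unfolding vnorm_def S_def ..
  ultimately have "S > 0" using assms by auto
  have "(\<Sum>i<d. (cmod (vnormalize d x i))\<^sup>2) = (\<Sum>i<d. (cmod (x i))\<^sup>2 / S)"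
    using \<open>S > 0\<close> by (intro sum.cong refl) (simp add: vnormalize_def norm_eq norm_divide power_divide)
  also have "\<dots> = 1" using \<open>S > 0\<close> by (simp add: sum_divide_distrib[symmetric] S_def[symmetric])
  finally show ?thesis unfolding vnorm_def by simp
qed

lemma cmod_le_1_if_unit_ball: "x \<in> unit_ball d \<Longrightarrow> i < d \<Longrightarrow> cmod (x i) \<le> 1"
proof -
  assume "x \<in> unit_ball d" "i < d"
  then have "(cmod (x i))\<^sup>2 \<le> (\<Sum>i<d. (cmod (x i))\<^sup>2)" "(\<Sum>i<d. (cmod (x i))\<^sup>2) \<le> 1"
    by (auto simp: unit_ball_def vnorm_def real_sqrt_le_1_iff intro!: member_le_sum)
  then have "(cmod (x i))\<^sup>2 \<le> 1\<^sup>2" by simp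
  then show "cmod (x i) \<le> 1" by (rule power2_le_imp_le) simp
qed

lemma emeasure_unit_ball_finite: "emeasure (PiM {..<d} (\<lambda>_. lborel)) (unit_ball d) \<noteq> \<infinity>"
proof -
  interpret product_sigma_finite "\<lambda>_. (lborel :: complex measure)" by standard
  have "unit_ball d \<subseteq> PiE {..<d} (\<lambda>_. cball 0 1)"
  proof
    fix x assume x: "x \<in> unit_ball d"
    then have "x \<in> extensional {..<d}" by (simp add: unit_ball_def space_PiM PiE_def)
    with x show "x \<in> PiE {..<d} (\<lambda>_. cball 0 1)" by (auto simp: PiE_iff cmod_le_1_if_unit_ball)
  qed
  then have "emeasure (PiM {..<d} (\<lambda>_. lborel)) (unit_ball d)
      \<le> emeasure (PiM {..<d} (\<lambda>_. lborel)) (PiE {..<d} (\<lambda>_. cball (0::complex) 1))"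
    by (intro emeasure_mono) auto
  also have "\<dots> = (\<Prod>i<d. emeasure lborel (cball (0::complex) 1))"
    by (rule emeasure_PiM) auto
  also have "\<dots> < \<infinity>"
    using emeasure_lborel_cball_finite[of "0::complex" 1] by (simp add: power_less_top_ennreal)
  finally show ?thesis by simp
qed

lemma emeasure_unit_ball_pos:
  assumes "0 < d"
  shows "emeasure (PiM {..<d} (\<lambda>_. lborel)) (unit_ball d) \<noteq> 0"
proof -
  interpret product_sigma_finite "\<lambda>_. (lborel :: complex measure)" by standard
  define r where "r = 1 / real d"
  have "r > 0" using assms unfolding r_def by simp
  have "PiE {..<d} (\<lambda>_. ball 0 r) \<subseteq> unit_ball d"
  proof
    fix x assume x: "x \<in> PiE {..<d} (\<lambda>_. ball (0::complex) r)"
    have "(\<Sum>i<d. (cmod (x i))\<^sup>2) \<le> (\<Sum>i<d. r\<^sup>2)"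
      using x \<open>r > 0\<close> by (intro sum_mono power_mono) (auto simp: PiE_iff less_imp_le)
    also have "\<dots> \<le> 1" using assms unfolding r_def by (simp add: power2_eq_square field_simps)
    finally show "x \<in> unit_ball d"
      using x by (auto simp: unit_ball_def vnorm_def space_PiM PiE_iff)
  qed
  then have "emeasure (PiM {..<d} (\<lambda>_. lborel)) (PiE {..<d} (\<lambda>_. ball (0::complex) r))
      \<le> emeasure (PiM {..<d} (\<lambda>_. lborel)) (unit_ball d)"
    by (intro emeasure_mono unit_ball_sets)
  moreover have "emeasure (PiM {..<d} (\<lambda>_. lborel)) (PiE {..<d} (\<lambda>_. ball (0::complex) r))
      = (\<Prod>i<d. emeasure lborel (ball (0::complex) r))"
    by (rule emeasure_PiM) auto
  moreover have "unit_ball_vol 2 \<noteq> 0" using unit_ball_vol_pos[of 2] by linarith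
  then have "emeasure lborel (ball (0::complex) r) \<noteq> 0"
    using \<open>r > 0\<close> by (simp add: emeasure_ball)
  ultimately show ?thesis by (auto simp: le_zero_eq)
qed

lemma AE_vnorm_nonzero:
  assumes "0 < d"
  shows "AE x in PiM {..<d} (\<lambda>_. lborel). vnorm d x \<noteq> 0"
proof (rule AE_I')
  interpret product_sigma_finite "\<lambda>_. (lborel :: complex measure)" by standard
  have "PiE {..<d} (\<lambda>_. {0::complex}) \<in> sets (PiM {..<d} (\<lambda>_. lborel))"
    by (rule sets_PiM_I_finite) auto
  moreover have "emeasure (PiM {..<d} (\<lambda>_. lborel)) (PiE {..<d} (\<lambda>_. {0::complex}))
      = (\<Prod>i<d. emeasure lborel {0::complex})"
    by (rule emeasure_PiM) auto
  ultimately show "PiE {..<d} (\<lambda>_. {0::complex}) \<in> null_sets (PiM {..<d} (\<lambda>_. lborel))"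
    using assms by (intro null_setsI) (simp_all add: power_0_left)
  show "{x \<in> space (PiM {..<d} (\<lambda>_. lborel)). \<not> vnorm d x \<noteq> 0} \<subseteq> PiE {..<d} (\<lambda>_. {0})"
    by (auto simp: vnorm_def space_PiM PiE_iff sum_nonneg_eq_0_iff extensional_def fun_eq_iff)
qed

lemma prob_space_sphere_unif:
  assumes "0 < d"
  shows "prob_space (sphere_unif d)"
  unfolding sphere_unif_eq_distr
  using emeasure_unit_ball_pos[OF assms] emeasure_unit_ball_finite vnormalize_measurable
  by (intro prob_space.prob_space_distr prob_space_uniform_measure) simp_all

lemma AE_sphere_unif_vnorm:
  assumes "0 < d"
  shows "AE x in sphere_unif d. vnorm d x = 1"
proof -
  have "AE x in uniform_measure (PiM {..<d} (\<lambda>_. lborel)) (unit_ball d). vnorm d (vnormalize d x) = 1"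
    using AE_vnorm_nonzero[OF assms]
    by (intro AE_uniform_measureI unit_ball_sets) (auto elim!: AE_mp intro: vnorm_vnormalize)
  then show ?thesis
    unfolding sphere_unif_eq_distr
    by (subst AE_distr_iff) (use vnormalize_measurable in \<open>auto simp: vec_space_def\<close>)
qed

lemma sum_lessThan_mult:
  fixes g :: "nat \<Rightarrow> 'a::comm_monoid_add"
  shows "(\<Sum>i<p * q. g i) = (\<Sum>a<p. \<Sum>c<q. g (a * q + c))"
proof -
  have "(\<Sum>c<q. g (a * q + c)) = sum g {a * q..<a * q + q}" for a
    using sum.shift_bounds_nat_ivl[of g 0 "a * q" q] by (simp add: atLeast0LessThan add.commute)
  then show ?thesis by (simp add: sum.nat_group)
qed

lemma prod_vec3_norm:
  "(\<Sum>m<D 0 * D 1 * D 2. prod_vec3 D x1 x2 x3 m * cnj (prod_vec3 D x1 x2 x3 m))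
    = (\<Sum>a<D 0. x1 a * cnj (x1 a)) * (\<Sum>b<D 1. x2 b * cnj (x2 b)) * (\<Sum>c<D 2. x3 c * cnj (x3 c))"
proof -
  let ?\<psi> = "prod_vec3 D x1 x2 x3"
  have entry: "?\<psi> ((a * D 1 + b) * D 2 + c) = x1 a * x2 b * x3 c"
    if "a < D 0" "b < D 1" "c < D 2" for a b c
  proof -
    let ?j = "\<lambda>k. if k = 0 then a else if k = 1 then b else c"
    define m where "m = (a * D 1 + b) * D 2 + c"
    have "m < D 0 * D 1 * D 2"
      using flat_idx_less[of ?j D] that by (simp add: flat_idx_eq m_def)
    moreover have "m mod D 2 = c" "m div D 2 = a * D 1 + b" using that by (simp_all add: m_def)
    moreover have "m div (D 1 * D 2) = a" "(m div D 2) mod D 1 = b"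
      using that div_mult2_eq[of m "D 2" "D 1"] by (simp_all add: m_def mult.commute)
    ultimately show ?thesis unfolding m_def[symmetric] prod_vec3_def by simp
  qed
  have "(\<Sum>m<D 0 * D 1 * D 2. ?\<psi> m * cnj (?\<psi> m))
      = (\<Sum>a<D 0. \<Sum>b<D 1. \<Sum>c<D 2. ?\<psi> ((a * D 1 + b) * D 2 + c) * cnj (?\<psi> ((a * D 1 + b) * D 2 + c)))"
    by (simp only: sum_lessThan_mult)
  also have "\<dots> = (\<Sum>a<D 0. \<Sum>b<D 1. \<Sum>c<D 2.
      (x1 a * cnj (x1 a)) * ((x2 b * cnj (x2 b)) * (x3 c * cnj (x3 c))))"
    by (intro sum.cong refl) (simp only: lessThan_iff entry, simp add: mult_ac)
  also have "\<dots> = (\<Sum>a<D 0. x1 a * cnj (x1 a)) * ((\<Sum>b<D 1. x2 b * cnj (x2 b)) * (\<Sum>c<D 2. x3 c * cnj (x3 c)))"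
    by (simp only: sum_product) (simp only: sum_distrib_left)
  finally show ?thesis by (simp only: mult.assoc)
qed

lemma one_tangle_measurable:
  "(\<lambda>p. one_tangle D (mat_apply n (fst (fst (fst p))) (prod_vec3 D (snd (fst (fst p))) (snd (fst p)) (snd p))))
    \<in> borel_measurable (((mat_space n \<Otimes>\<^sub>M vec_space d1) \<Otimes>\<^sub>M vec_space d2) \<Otimes>\<^sub>M vec_space d3)"
proof -
  have [measurable]: "(\<lambda>p. mat_apply n (fst (fst (fst p))) (prod_vec3 D (snd (fst (fst p))) (snd (fst p)) (snd p)) m)
    \<in> borel_measurable (((mat_space n \<Otimes>\<^sub>M vec_space d1) \<Otimes>\<^sub>M vec_space d2) \<Otimes>\<^sub>M vec_space d3)" for m
    unfolding mat_apply_def prod_vec3_def restrict_def mat_space_def vec_space_def by measurable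
  have [measurable]: "(\<lambda>z. purity D A (\<psi> z)) \<in> borel_measurable M"
    if [measurable]: "\<And>m. (\<lambda>z. \<psi> z m) \<in> borel_measurable M" for A M and \<psi> :: "_ \<Rightarrow> nat \<Rightarrow> complex"
    unfolding purity_def Let_def by measurable
  show ?thesis unfolding one_tangle_def tangle_def by measurable
qed

theorem mainTheorem9:
  fixes d1 d2 d3 :: nat and \<mu> :: "(nat \<times> nat \<Rightarrow> complex) measure"
  assumes "d1 \<ge> 2" and "d2 \<ge> 2" and "d3 \<ge> 2"
    and "is_haar_unitary (d1 * d2 * d3) \<mu>"
  shows "(\<integral>U. entangling_power d1 d2 d3 U \<partial>\<mu>) =
    (3 * real (d1 * d2 * d3) + 3 - real d1 - real d2 - real d3
       - real (d1 * d2) - real (d1 * d3) - real (d2 * d3))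
    / ((3 / 2) * (real (d1 * d2 * d3) + 1))"
proof -
  define n D where "n = d1 * d2 * d3" and "D = dims3 d1 d2 d3"
  have n_eq: "n = D 0 * D 1 * D 2" and dims: "D 0 = d1" "D 1 = d2" "D 2 = d3"
    by (simp_all add: n_def D_def dims3_def)
  have haar: "is_haar_unitary n \<mu>" using assms(4) by (simp add: n_def)
  have "2 \<le> n" using assms(1-3) mult_le_mono[of 2 d1 1 d2] mult_le_mono[of 2 "d1 * d2" 1 d3]
    by (simp add: n_def)
  have [measurable_cong]: "sets \<mu> = sets (mat_space n)" using haar by (simp add: is_haar_unitary_def)
  let ?T = "\<lambda>(((U, x1), x2), x3). one_tangle D (mat_apply n U (prod_vec3 D x1 x2 x3))"
  have unit: "(\<Sum>m<n. prod_vec3 D x1 x2 x3 m * cnj (prod_vec3 D x1 x2 x3 m)) = 1"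
    if "vnorm d1 x1 = 1" "vnorm d2 x2 = 1" "vnorm d3 x3 = 1" for x1 x2 x3
    using that dims prod_vec3_norm[of D x1 x2 x3] by (simp add: n_eq unit_sum_if_vnorm_eq_1)
  show ?thesis
    unfolding entangling_power_def D_def[symmetric] n_def[symmetric]
  proof (rule integral_iterated4_eq_const[where T = ?T, simplified])
    show "?T \<in> borel_measurable (((\<mu> \<Otimes>\<^sub>M sphere_unif d1) \<Otimes>\<^sub>M sphere_unif d2) \<Otimes>\<^sub>M sphere_unif d3)"
      using one_tangle_measurable[of D n d1 d2 d3] by (simp add: split_beta')
    show "\<bar>one_tangle D (mat_apply n U (prod_vec3 D x1 x2 x3))\<bar> \<le> 2 + 2 * real (n\<^sup>2)"
      if "U \<in> unitary_set n" "vnorm d1 x1 = 1" "vnorm d2 x2 = 1" "vnorm d3 x3 = 1" for U x1 x2 x3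
      using abs_one_tangle_le cmod_mat_apply_le_1[OF that(1) unit[OF that(2-4)]] n_eq by auto
    show "(\<integral>U. one_tangle D (mat_apply n U (prod_vec3 D x1 x2 x3)) \<partial>\<mu>)
      = (3 * real n + 3 - real d1 - real d2 - real d3 - real (d1 * d2) - real (d1 * d3) - real (d2 * d3))
        / ((3 / 2) * (real n + 1))"
      if "vnorm d1 x1 = 1" "vnorm d2 x2 = 1" "vnorm d3 x3 = 1" for x1 x2 x3
      using haar_column.integral_one_tangle[OF haar_column.intro[OF haar unit[OF that] \<open>2 \<le> n\<close>] n_eq]
        dims by simp
  qed (use assms AE_unitary_haar[OF haar] in \<open>auto intro: prob_space_sphere_unif AE_sphere_unif_vnorm
    simp: is_haar_unitary_def\<close>)
qed

end
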